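(* Consider $\min_{\beta\in\mathbb{R}^p}\Phi(\beta)=f(\beta)+\sum_{j=1}^p g_j(\beta_j)$ with $f(\beta)=F(X\beta)$ for some $X\in\mathbb{R}^{n\times p}$. Suppose: (1) $f:\mathbb{R}^p\to\mathbb{R}$ is convex and differentiable and for each $j$ there is $L_j>0$ with $|\nabla_j f(x+he_j)-\nabla_j f(x)|\le L_j|h|$ for all $x\in\mathbb{R}^p,h\in\mathbb{R}$; each $g_j:\mathbb{R}\to\mathbb{R}$ is proper, closed and lower bounded; $\Phi$ admits at least one critical point; and for every $j$, $g_j/L_j$ is $\alpha$-semi-convex for some $\alpha<1$, i.e. $g_j/L_j+\frac{\alpha}{2}(\cdot)^2$ is convex. (2) The sequence $(\beta^{(k)})_{k\ge0}$ generated by cyclic proximal coordinate descent converges toward a critical point $\hat\beta$. (3) $\hat\beta$ is non-degenerate: for all $j\notin\mathcal{S}:=\mathrm{gsupp}(\hat\beta)$, $-\nabla_j f(\hat\beta)\in\mathrm{interior}(\partial g_j(\hat\beta_j))$. Then there exists $K>0$ such that for all $k\ge K$, $\beta^{(k)}_{\mathcal{S}^c}=\hat\beta_{\mathcal{S}^c}$.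
   Context: $\partial$ denotes the Fréchet subdifferential; with $g(\beta)=\sum_j g_j(\beta_j)$, a critical point of $\Phi$ is a point $x$ with $-\nabla f(x)\in\partial g(x)$. The generalized support is $\mathrm{gsupp}(\beta)=\{j\in[p]:\partial g_j(\beta_j)\text{ is a singleton}\}$, and $\mathcal{S}^c=[p]\setminus\mathcal{S}$. Cyclic proximal coordinate descent: starting from $\beta^{(0)}$, an epoch $k\to k+1$ updates successively for $j=1,\dots,p$ the $j$-th coordinate of the current point $\beta$ by $\beta_j\leftarrow\mathrm{prox}_{g_j/L_j}\big(\beta_j-\frac{1}{L_j}\nabla_j f(\beta)\big)$, where $\mathrm{prox}_{h}(z)=\arg\min_u \frac12(u-z)^2+h(u)$ (single-valued under the semi-convexity assumption); $\beta^{(k)}$ is the point after $k$ epochs. *)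

theory Defs
  imports "HOL-Analysis.Analysis"
begin

definition partial_deriv :: "(real^'p \<Rightarrow> real) \<Rightarrow> 'p \<Rightarrow> real^'p \<Rightarrow> real" where
  "partial_deriv f j x = deriv (\<lambda>t. f (x + t *\<^sub>R axis j 1)) 0"

definition grad :: "(real^'p \<Rightarrow> real) \<Rightarrow> real^'p \<Rightarrow> real^'p" where
  "grad f x = (\<chi> j. partial_deriv f j x)"

text \<open>Frechet (regular) subdifferential: v is a Frechet subgradient of h at x iff
  liminf_{y -> x, y ~= x} (h y - h x - <v, y - x>) / |y - x| >= 0.\<close>
definition frechet_subdiff :: "('a::real_inner \<Rightarrow> real) \<Rightarrow> 'a \<Rightarrow> 'a set" where
  "frechet_subdiff h x = {v. \<forall>e>0. \<exists>d>0. \<forall>y. dist y x < d \<longrightarrow>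
       h y \<ge> h x + inner v (y - x) - e * norm (y - x)}"

definition closed_fun :: "(real \<Rightarrow> real) \<Rightarrow> bool" where
  "closed_fun h \<longleftrightarrow> closed {(x, t). h x \<le> t}"

definition semiconvex :: "real \<Rightarrow> (real \<Rightarrow> real) \<Rightarrow> bool" where
  "semiconvex \<alpha> h \<longleftrightarrow> convex_on UNIV (\<lambda>u. h u + \<alpha> / 2 * u\<^sup>2)"

text \<open>Proximal operator (single-valued under the semi-convexity assumption).\<close>
definition prox :: "(real \<Rightarrow> real) \<Rightarrow> real \<Rightarrow> real" where
  "prox h z = (THE u. \<forall>v. (u - z)\<^sup>2 / 2 + h u \<le> (v - z)\<^sup>2 / 2 + h v)"

definition cd_update :: "(real^'p \<Rightarrow> real) \<Rightarrow> ('p \<Rightarrow> real \<Rightarrow> real) \<Rightarrow> ('p \<Rightarrow> real)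
    \<Rightarrow> 'p \<Rightarrow> real^'p \<Rightarrow> real^'p" where
  "cd_update f g L j b =
     (\<chi> i. if i = j then prox (\<lambda>u. g j u / L j) (b $ j - partial_deriv f j b / L j) else b $ i)"

definition cd_epoch :: "(real^'p \<Rightarrow> real) \<Rightarrow> ('p \<Rightarrow> real \<Rightarrow> real) \<Rightarrow> ('p \<Rightarrow> real)
    \<Rightarrow> 'p list \<Rightarrow> real^'p \<Rightarrow> real^'p" where
  "cd_epoch f g L js b = fold (cd_update f g L) js b"

definition cd_iter :: "(real^'p \<Rightarrow> real) \<Rightarrow> ('p \<Rightarrow> real \<Rightarrow> real) \<Rightarrow> ('p \<Rightarrow> real)
    \<Rightarrow> 'p list \<Rightarrow> real^'p \<Rightarrow> nat \<Rightarrow> real^'p" where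
  "cd_iter f g L js b0 k = (cd_epoch f g L js ^^ k) b0"

definition critical_point :: "(real^'p \<Rightarrow> real) \<Rightarrow> ('p \<Rightarrow> real \<Rightarrow> real) \<Rightarrow> real^'p \<Rightarrow> bool" where
  "critical_point f g x \<longleftrightarrow> - grad f x \<in> frechet_subdiff (\<lambda>b. \<Sum>j\<in>UNIV. g j (b $ j)) x"

definition gsupp :: "('p \<Rightarrow> real \<Rightarrow> real) \<Rightarrow> real^'p \<Rightarrow> 'p set" where
  "gsupp g b = {j. \<exists>v. frechet_subdiff (g j) (b $ j) = {v}}"

end

theory Submission
  imports Defs
begin

text \<open>Let \<open>\<beta>\<close> be the limit and \<open>j\<close> a coordinate outside its generalized support.
  Write the prox argument of the \<open>j\<close>-th update at the intermediate point \<open>b\<close> of an epoch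
  as \<open>\<beta>\<^sub>j + v / L\<^sub>j\<close> with \<open>v = L\<^sub>j (b\<^sub>j - \<beta>\<^sub>j) - \<nabla>\<^sub>jf(b)\<close>. As the iterates converge,
  \<open>v \<rightarrow> -\<nabla>\<^sub>jf(\<beta>)\<close>, an interior point of \<open>\<partial>g\<^sub>j(\<beta>\<^sub>j)\<close>, so eventually \<open>v\<close> is itself a
  Frechet subgradient of \<open>g\<^sub>j\<close> at \<open>\<beta>\<^sub>j\<close>. The prox objective is then \<open>(1 - \<alpha>)\<close>-strongly
  convex and Frechet stationary at \<open>\<beta>\<^sub>j\<close>, hence uniquely minimised there, and the update
  returns \<open>\<beta>\<^sub>j\<close> exactly. The limit of \<open>v\<close> uses continuity of \<open>\<nabla>\<^sub>jf\<close>, which holds for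
  every convex differentiable \<open>f\<close> because \<open>\<nabla>\<^sub>jf\<close> is squeezed between continuous difference
  quotients.

  Coordinatewise Lipschitz gradients, closedness and lower boundedness of the \<open>g\<^sub>j\<close> and
  criticality of \<open>\<beta>\<close> serve in the paper to establish the convergence, which is assumed here.\<close>

lemma strongly_convex_frechet_stationary_imp_strict_min:
  fixes \<phi> :: "'a::real_inner \<Rightarrow> real"
  assumes a: "a > 0"
    and cvx: "convex_on UNIV (\<lambda>u. \<phi> u - a * (norm u)\<^sup>2)"
    and stat: "0 \<in> frechet_subdiff \<phi> x"
    and yx: "y \<noteq> x"
  shows "\<phi> x < \<phi> y"
proof -
  define c where "c = norm (y - x)"
  have c: "c > 0" using yx by (simp add: c_def)
  have "\<forall>e>0. \<exists>d>0. \<forall>w. dist w x < d \<longrightarrow> \<phi> w \<ge> \<phi> x - e * norm (w - x)"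
    using stat by (simp add: frechet_subdiff_def)
  moreover have "a * c / 4 > 0" using a c by simp
  ultimately obtain d where d: "d > 0"
    and near: "\<And>w. dist w x < d \<Longrightarrow> \<phi> w \<ge> \<phi> x - a * c / 4 * norm (w - x)"
    by blast
  define t where "t = min (1/2) (d / (2 * c))"
  have t: "0 < t" "t \<le> 1/2" using d c by (auto simp: t_def)
  have "t * c \<le> d / 2" using c by (simp add: t_def min_def field_simps)
  hence tc: "t * c < d" using d by simp
  define w where "w = (1 - t) *\<^sub>R x + t *\<^sub>R y"
  have wx: "norm (w - x) = t * c"
  proof -
    have "w - x = t *\<^sub>R (y - x)" by (simp add: w_def algebra_simps)
    thus ?thesis using t by (simp add: c_def)
  qed
  have sq: "(norm w)\<^sup>2 = (1 - t) * (norm x)\<^sup>2 + t * (norm y)\<^sup>2 - t * (1 - t) * c\<^sup>2"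
    unfolding w_def c_def power2_norm_eq_inner
    by (simp add: inner_simps inner_commute algebra_simps power2_eq_square)
  have "\<phi> w - a * (norm w)\<^sup>2 \<le> (1 - t) * (\<phi> x - a * (norm x)\<^sup>2) + t * (\<phi> y - a * (norm y)\<^sup>2)"
    using convex_onD[OF cvx, of t x y] t by (simp add: w_def)
  hence upper: "\<phi> w \<le> (1 - t) * \<phi> x + t * \<phi> y - a * t * (1 - t) * c\<^sup>2"
    unfolding sq by (simp add: algebra_simps)
  have lower: "\<phi> w \<ge> \<phi> x - a * c / 4 * (t * c)"
    using near[of w] wx tc by (simp add: dist_norm)
  have "t * (a * (1 - t) * c\<^sup>2 - a * c\<^sup>2 / 4) \<le> t * (\<phi> y - \<phi> x)"
    using upper lower by (simp add: algebra_simps power2_eq_square)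
  hence "a * (1 - t) * c\<^sup>2 - a * c\<^sup>2 / 4 \<le> \<phi> y - \<phi> x" using t by simp
  moreover have "a * (1/2) * c\<^sup>2 \<le> a * (1 - t) * c\<^sup>2"
    using a t by (intro mult_right_mono mult_left_mono) auto
  moreover have "a * c\<^sup>2 / 4 < a * (1/2) * c\<^sup>2" using a c by simp
  ultimately show ?thesis by linarith
qed

lemma frechet_stationary_prox_objective:
  fixes G :: "real \<Rightarrow> real"
  assumes L: "L > 0" and v: "v \<in> frechet_subdiff G x"
  shows "0 \<in> frechet_subdiff (\<lambda>u. (u - (x + v / L))\<^sup>2 / 2 + G u / L) x"
  unfolding frechet_subdiff_def
proof (intro CollectI allI impI)
  fix e :: real assume "e > 0"
  have "\<forall>e>0. \<exists>d>0. \<forall>u. dist u x < d \<longrightarrow> G u \<ge> G x + v * (u - x) - e * \<bar>u - x\<bar>"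
    using v by (simp add: frechet_subdiff_def)
  moreover have "L * e > 0" using L \<open>e > 0\<close> by simp
  ultimately obtain d where "d > 0"
    and near: "\<And>u. dist u x < d \<Longrightarrow> G u \<ge> G x + v * (u - x) - L * e * \<bar>u - x\<bar>"
    by blast
  have "(x - (x + v / L))\<^sup>2 / 2 + G x / L - e * \<bar>u - x\<bar> \<le> (u - (x + v / L))\<^sup>2 / 2 + G u / L"
    if "dist u x < d" for u
  proof -
    have "G x / L + v * (u - x) / L - e * \<bar>u - x\<bar> \<le> G u / L"
      using divide_right_mono[OF near[OF that], of L] L by (simp add: diff_divide_distrib add_divide_distrib)
    moreover have "(u - (x + v / L))\<^sup>2 / 2 = (x - (x + v / L))\<^sup>2 / 2 - v * (u - x) / L + (u - x)\<^sup>2 / 2"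
      using L by (simp add: power2_eq_square field_simps)
    ultimately show ?thesis using zero_le_power2[of "u - x"] by linarith
  qed
  with \<open>d > 0\<close> show "\<exists>d>0. \<forall>u. dist u x < d \<longrightarrow>
      (x - (x + v / L))\<^sup>2 / 2 + G x / L + inner 0 (u - x) - e * norm (u - x)
      \<le> (u - (x + v / L))\<^sup>2 / 2 + G u / L"
    by auto
qed

lemma prox_eqI:
  assumes "\<And>u. u \<noteq> x \<Longrightarrow> (x - z)\<^sup>2 / 2 + h x < (u - z)\<^sup>2 / 2 + h u"
  shows "prox h z = x"
  unfolding prox_def
proof (rule the_equality)
  show "\<forall>v. (x - z)\<^sup>2 / 2 + h x \<le> (v - z)\<^sup>2 / 2 + h v"
    using assms by (metis order_le_less)
next
  fix u assume "\<forall>v. (u - z)\<^sup>2 / 2 + h u \<le> (v - z)\<^sup>2 / 2 + h v"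
  thus "u = x" using assms[of u] by (metis not_less)
qed

lemma prox_eq_of_frechet_subgradient:
  fixes G :: "real \<Rightarrow> real"
  assumes L: "L > 0" and \<alpha>: "\<alpha> < 1" and semi: "semiconvex \<alpha> (\<lambda>u. G u / L)"
    and v: "v \<in> frechet_subdiff G x"
  shows "prox (\<lambda>u. G u / L) (x + v / L) = x"
proof (rule prox_eqI)
  define z where "z = x + v / L"
  define \<phi> where "\<phi> u = (u - z)\<^sup>2 / 2 + G u / L" for u
  have "convex_on UNIV (\<lambda>u. (G u / L + \<alpha> / 2 * u\<^sup>2) + (z\<^sup>2 / 2 - z * u))"
  proof (rule convex_on_add)
    show "convex_on UNIV (\<lambda>u. G u / L + \<alpha> / 2 * u\<^sup>2)"
      using semi by (simp add: semiconvex_def)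
    show "convex_on UNIV (\<lambda>u. z\<^sup>2 / 2 - z * u)"
      by (rule convex_onI) (auto simp: field_simps)
  qed
  moreover have "\<phi> u - (1 - \<alpha>) / 2 * (norm u)\<^sup>2 = (G u / L + \<alpha> / 2 * u\<^sup>2) + (z\<^sup>2 / 2 - z * u)" for u
    by (simp add: \<phi>_def power2_eq_square field_simps)
  ultimately have cvx: "convex_on UNIV (\<lambda>u. \<phi> u - (1 - \<alpha>) / 2 * (norm u)\<^sup>2)" by simp
  have stat: "0 \<in> frechet_subdiff \<phi> x"
    using frechet_stationary_prox_objective[OF L v] by (simp add: \<phi>_def[abs_def] z_def)
  have "\<phi> x < \<phi> u" if "u \<noteq> x" for u
    using strongly_convex_frechet_stationary_imp_strict_min[OF _ cvx stat that] \<alpha> by simp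
  thus "(x - (x + v / L))\<^sup>2 / 2 + G x / L < (u - (x + v / L))\<^sup>2 / 2 + G u / L" if "u \<noteq> x" for u
    using that by (simp add: \<phi>_def z_def)
qed

lemma has_real_derivative_partial_deriv:
  fixes f :: "real^'p \<Rightarrow> real"
  assumes "f differentiable (at b)"
  shows "((\<lambda>t. f (b + t *\<^sub>R axis j 1)) has_real_derivative partial_deriv f j b) (at 0)"
proof -
  have "(f \<circ> (\<lambda>t. b + t *\<^sub>R axis j 1)) differentiable at 0"
    using assms by (intro differentiable_chain_at derivative_intros) auto
  thus ?thesis
    unfolding partial_deriv_def by (simp add: o_def DERIV_deriv_iff_real_differentiable)
qed

lemma convex_on_partial_deriv_le:
  fixes f :: "real^'p \<Rightarrow> real"
  assumes cvx: "convex_on UNIV f" and diff: "f differentiable (at b)"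
  shows "partial_deriv f j b * t \<le> f (b + t *\<^sub>R axis j 1) - f b"
proof -
  have "convex_on UNIV (\<lambda>t. f (b + t *\<^sub>R axis j 1))"
  proof (rule convex_onI)
    fix s u v :: real assume "0 < v" "v < 1"
    moreover have "b + ((1 - v) *\<^sub>R s + v *\<^sub>R u) *\<^sub>R axis j 1
        = (1 - v) *\<^sub>R (b + s *\<^sub>R axis j 1) + v *\<^sub>R (b + u *\<^sub>R axis j (1::real))"
      by (simp add: algebra_simps)
    ultimately show "f (b + ((1 - v) *\<^sub>R s + v *\<^sub>R u) *\<^sub>R axis j 1)
        \<le> (1 - v) * f (b + s *\<^sub>R axis j 1) + v * f (b + u *\<^sub>R axis j 1)"
      by (simp add: convex_onD[OF cvx])
  qed simp
  from convex_on_imp_above_tangent[OF this, of 0 t]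
  show ?thesis using has_real_derivative_partial_deriv[OF diff] by simp
qed

lemma isCont_partial_deriv:
  fixes f :: "real^'p \<Rightarrow> real"
  assumes cvx: "convex_on UNIV f" and diff: "\<And>x. f differentiable (at x)"
  shows "isCont (partial_deriv f j) x"
proof -
  define Q where "Q t b = (f (b + t *\<^sub>R axis j 1) - f b) / t" for t b
  have cont_f: "isCont f b" for b using diff differentiable_imp_continuous_within by blast
  have cont_Q: "isCont (Q t) x" if "t \<noteq> 0" for t
    unfolding Q_def using that by (intro continuous_intros cont_f isCont_o2[OF _ cont_f])
  have above: "partial_deriv f j b \<le> Q t b" if "t > 0" for t b
    using convex_on_partial_deriv_le[OF cvx diff[of b], of j t] that by (simp add: Q_def pos_le_divide_eq)
  have below: "Q t b \<le> partial_deriv f j b" if "t < 0" for t b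
    using convex_on_partial_deriv_le[OF cvx diff[of b], of j t] that by (simp add: Q_def neg_divide_le_eq)
  have lim: "((\<lambda>t. Q t x) \<longlongrightarrow> partial_deriv f j x) (at 0)"
    using has_real_derivative_partial_deriv[OF diff, of x j]
    unfolding has_field_derivative_iff Q_def by simp
  show ?thesis
    unfolding isCont_def
  proof (rule order_tendstoI)
    fix u assume "partial_deriv f j x < u"
    with lim have "\<forall>\<^sub>F t in at_right 0. 0 < t \<and> Q t x < u"
      by (intro eventually_conj eventually_at_right_less order_tendstoD(2)[OF tendsto_mono[OF at_le]]) auto
    then obtain t where "t > 0" "Q t x < u"
      using eventually_happens' trivial_limit_at_right_real by blast
    hence "\<forall>\<^sub>F b in at x. Q t b < u"
      using cont_Q by (intro order_tendstoD(2)[of "Q t"]) (auto simp: isCont_def)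
    thus "\<forall>\<^sub>F b in at x. partial_deriv f j b < u"
      by eventually_elim (rule le_less_trans[OF above[OF \<open>t > 0\<close>]])
  next
    fix l assume "l < partial_deriv f j x"
    with lim have "\<forall>\<^sub>F t in at_left 0. t < 0 \<and> l < Q t x"
      by (intro eventually_conj eventually_at_leftI[of "-1"] order_tendstoD(1)[OF tendsto_mono[OF at_le]]) auto
    then obtain t where "t < 0" "l < Q t x"
      using eventually_happens' trivial_limit_at_left_real by blast
    hence "\<forall>\<^sub>F b in at x. l < Q t b"
      using cont_Q by (intro order_tendstoD(1)[of "Q t"]) (auto simp: isCont_def)
    thus "\<forall>\<^sub>F b in at x. l < partial_deriv f j b"
      by eventually_elim (rule less_le_trans[OF _ below[OF \<open>t < 0\<close>]])
  qed
qed

lemma fold_cd_update_nth_notin: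
  "m \<notin> set js \<Longrightarrow> fold (cd_update f g L) js b $ m = b $ m"
  by (induction js arbitrary: b) (auto simp: cd_update_def)

lemma fold_cd_update_prefix_nth:
  assumes "set P \<inter> set Q = {}"
  shows "fold (cd_update f g L) P b $ m
    = (if m \<in> set P then fold (cd_update f g L) (P @ Q) b $ m else b $ m)"
proof (cases "m \<in> set P")
  case True
  with assms have "m \<notin> set Q" by blast
  with True show ?thesis by (simp add: fold_cd_update_nth_notin)
qed (simp add: fold_cd_update_nth_notin)

lemma cd_epoch_nth_eq_cd_update:
  assumes "j \<notin> set Q"
  shows "cd_epoch f g L (P @ j # Q) b $ j = cd_update f g L j (fold (cd_update f g L) P b) $ j"
  using assms by (simp add: cd_epoch_def fold_cd_update_nth_notin)

lemma cd_iter_Suc: "cd_iter f g L js b0 (Suc k) = cd_epoch f g L js (cd_iter f g L js b0 k)"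
  by (simp add: cd_iter_def)

lemma tendsto_cd_iter_partial_epoch:
  assumes disj: "set P \<inter> set Q = {}" and lim: "cd_iter f g L (P @ Q) b0 \<longlonglongrightarrow> x"
  shows "(\<lambda>k. fold (cd_update f g L) P (cd_iter f g L (P @ Q) b0 k)) \<longlonglongrightarrow> x"
proof (rule vec_tendstoI)
  fix m
  let ?\<beta> = "cd_iter f g L (P @ Q) b0"
  have "(\<lambda>k. ?\<beta> k $ m) \<longlonglongrightarrow> x $ m" using lim by (rule tendsto_vec_nth)
  moreover from this have "(\<lambda>k. ?\<beta> (Suc k) $ m) \<longlonglongrightarrow> x $ m" by (rule LIMSEQ_Suc)
  ultimately show "(\<lambda>k. fold (cd_update f g L) P (?\<beta> k) $ m) \<longlonglongrightarrow> x $ m"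
    using fold_cd_update_prefix_nth[OF disj]
    by (cases "m \<in> set P") (simp_all add: cd_iter_Suc cd_epoch_def)
qed

lemma eventually_cd_update_nth_eq:
  fixes f :: "real^'p \<Rightarrow> real" and b :: "'a \<Rightarrow> real^'p"
  assumes cvx: "convex_on UNIV f" and diff: "\<And>x. f differentiable (at x)"
    and L: "L j > 0" and \<alpha>: "\<alpha> < 1" and semi: "semiconvex \<alpha> (\<lambda>u. g j u / L j)"
    and nondegen: "- partial_deriv f j x \<in> interior (frechet_subdiff (g j) (x $ j))"
    and lim: "(b \<longlongrightarrow> x) F"
  shows "\<forall>\<^sub>F k in F. cd_update f g L j (b k) $ j = x $ j"
proof -
  define v where "v k = L j * (b k $ j - x $ j) - partial_deriv f j (b k)" for k
  have "(v \<longlongrightarrow> L j * (x $ j - x $ j) - partial_deriv f j x) F"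
    unfolding v_def
    by (intro tendsto_intros lim isCont_tendsto_compose[OF isCont_partial_deriv[OF cvx diff]])
  hence "\<forall>\<^sub>F k in F. v k \<in> interior (frechet_subdiff (g j) (x $ j))"
    using nondegen by (intro topological_tendstoD) auto
  thus ?thesis
  proof eventually_elim
    case (elim k)
    hence "v k \<in> frechet_subdiff (g j) (x $ j)" using interior_subset by blast
    moreover have "b k $ j - partial_deriv f j (b k) / L j = x $ j + v k / L j"
      using L by (simp add: v_def field_simps)
    ultimately show ?case
      using prox_eq_of_frechet_subgradient[OF L \<alpha> semi] by (simp add: cd_update_def)
  qed
qed

theorem proposition3:
  fixes F :: "real^'n \<Rightarrow> real" and X :: "real^'p^'n"
    and f :: "real^'p \<Rightarrow> real" and g :: "'p \<Rightarrow> real \<Rightarrow> real"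
    and L :: "'p \<Rightarrow> real" and \<alpha> :: real
    and js :: "'p list" and beta0 beta_hat :: "real^'p"
  assumes f_def: "f = (\<lambda>b. F (X *v b))"
    and f_convex: "convex_on UNIV f"
    and f_diff: "\<And>x. f differentiable (at x)"
    and L_pos: "\<And>j. L j > 0"
    and f_coord_lip: "\<And>j x h. \<bar>partial_deriv f j (x + h *\<^sub>R axis j 1) - partial_deriv f j x\<bar> \<le> L j * \<bar>h\<bar>"
    and g_closed: "\<And>j. closed_fun (g j)"
    and g_lb: "\<And>j. bdd_below (range (g j))"
    and crit_exists: "\<exists>x. critical_point f g x"
    and alpha_lt: "\<alpha> < 1"
    and g_semiconv: "\<And>j. semiconvex \<alpha> (\<lambda>u. g j u / L j)"
    and js_order: "distinct js" "set js = UNIV"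
    and conv: "cd_iter f g L js beta0 \<longlonglongrightarrow> beta_hat"
    and hat_crit: "critical_point f g beta_hat"
    and nondegen: "\<And>j. j \<notin> gsupp g beta_hat \<Longrightarrow>
        - partial_deriv f j beta_hat \<in> interior (frechet_subdiff (g j) (beta_hat $ j))"
  shows "\<exists>K>0. \<forall>k\<ge>K. \<forall>j. j \<notin> gsupp g beta_hat \<longrightarrow> cd_iter f g L js beta0 k $ j = beta_hat $ j"
proof -
  let ?\<beta> = "cd_iter f g L js beta0"
  have "\<forall>\<^sub>F k in sequentially. ?\<beta> k $ j = beta_hat $ j" if j: "j \<notin> gsupp g beta_hat" for j
  proof -
    obtain P Q where js: "js = P @ j # Q" using split_list[of j js] js_order(2) by auto
    have disj: "set P \<inter> set (j # Q) = {}" and "j \<notin> set Q" using js_order(1) by (auto simp: js)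
    have "(\<lambda>k. fold (cd_update f g L) P (?\<beta> k)) \<longlonglongrightarrow> beta_hat"
      using tendsto_cd_iter_partial_epoch[OF disj] conv by (simp add: js)
    from eventually_cd_update_nth_eq[where g = g and L = L and j = j,
        OF f_convex f_diff L_pos alpha_lt g_semiconv nondegen[OF j] this]
    have "\<forall>\<^sub>F k in sequentially. ?\<beta> (Suc k) $ j = beta_hat $ j"
      using \<open>j \<notin> set Q\<close> by (simp add: js cd_iter_Suc cd_epoch_nth_eq_cd_update)
    thus ?thesis by (rule eventually_sequentially_Suc[THEN iffD1])
  qed
  hence "\<forall>\<^sub>F k in sequentially. \<forall>j. j \<notin> gsupp g beta_hat \<longrightarrow> ?\<beta> k $ j = beta_hat $ j"
    by (intro eventually_all_finite) auto
  then obtain N where "\<And>k. k \<ge> N \<Longrightarrow> \<forall>j. j \<notin> gsupp g beta_hat \<longrightarrow> ?\<beta> k $ j = beta_hat $ j"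
    unfolding eventually_sequentially by blast
  thus ?thesis by (meson Suc_leD zero_less_Suc)
qed

end
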